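(* Fix stress levels $x_1<x_2$, a stress-change time $\tau>0$, and inspection times $0=t_0<t_1<\cdots<t_L$ with $t_k=\tau$ for some $1\le k<L$. Let $\theta=(\gamma_0,\gamma_1,a_1)\in\Theta=(0,\infty)^3$, and let $s=s(\theta)=u-\tau$, where $u$ is the unique positive root of $\frac{\gamma_1}{2}u^2+\gamma_0u-e^{a_1(x_1-x_2)}\left(\gamma_0\tau+\gamma_1\frac{\tau^2}{2}\right)=0$. Define $$R_\theta(t,x_1)=\exp\!\Big(-e^{a_1x_1}\big(\gamma_0t+\gamma_1\tfrac{t^2}{2}\big)\Big),\qquad R_\theta(t,x_2)=\exp\!\Big(-e^{a_1x_2}\big(\gamma_0(t+s)+\gamma_1\tfrac{(t+s)^2}{2}\big)\Big),$$ and the step-stress reliability $R_\theta(t)=R_\theta(t,x_1)$ for $0\le t\le\tau$, $R_\theta(t)=R_\theta(t,x_2)$ for $t\ge\tau$. Let $\pi_j(\theta)=R_\theta(t_{j-1})-R_\theta(t_j)$ for $j=1,\dots,L$, $\pi_{L+1}(\theta)=R_\theta(t_L)$, $\pi(\theta)=(\pi_1(\theta),\dots,\pi_{L+1}(\theta))^T$. Given observed counts $(n_1,\dots,n_{L+1})$ with $N=\sum_j n_j$ and $\widehat p=(n_1/N,\dots,n_{L+1}/N)^T$, and $\beta\ge0$, let $\widehat\theta_\beta$ be a minimum density power divergence estimator, i.e. a minimizer over $\Theta$ of $d_\beta(\widehat p,\pi(\theta))$, where for $\beta>0$ $$d_\beta(\widehat p,\pi(\theta))=\sum_{j=1}^{L+1}\Big[\pi_j(\theta)^{\beta+1}-\big(1+\tfrac1\beta\big)\pi_j(\theta)^\beta\widehat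 p_j+\tfrac1\beta\widehat p_j^{\beta+1}\Big]$$ and for $\beta=0$, $d_0(\widehat p,\pi(\theta))=\sum_{j}\widehat p_j\log(\widehat p_j/\pi_j(\theta))$. Then $\widehat\theta_\beta$ satisfies $U_\beta(\widehat\theta_\beta)=0\in\mathbb{R}^3$, where $$U_\beta(\theta)=W(\theta)^TD(\theta)^{\beta-1}\big(\widehat p-\pi(\theta)\big),$$ $D(\theta)=\mathrm{diag}(\pi_1(\theta),\dots,\pi_{L+1}(\theta))$, and $W(\theta)$ is the $(L+1)\times3$ Jacobian matrix of $\pi(\theta)$ whose $j$-th row is $w_j^T$ with $w_j=\frac{\partial R_\theta(t_{j-1},x_1)}{\partial\theta}-\frac{\partial R_\theta(t_j,x_1)}{\partial\theta}$ if $t_{j-1}<\tau$, $w_j=\frac{\partial R_\theta(t_{j-1},x_2)}{\partial\theta}-\frac{\partial R_\theta(t_j,x_2)}{\partial\theta}$ if $\tau\le t_{j-1}$ and $j\le L$, and $w_{L+1}=\frac{\partial R_\theta(t_L,x_2)}{\partial\theta}$. Here, with $k_1(t)=\gamma_1t+\gamma_0$ and $k_2(t)=\frac{\gamma_1}{2}t+\gamma_0$, the gradients are $$\frac{\partial R_\theta(t,x_1)}{\partial\gamma_0}=-R_\theta(t,x_1)e^{a_1x_1}t,\quad \frac{\partial R_\theta(t,x_1)}{\partial\gamma_1}=-R_\theta(t,x_1)e^{a_1x_1}\frac{t^2}{2},\quad \frac{\partial R_\theta(t,x_1)}{\partial a_1}=-R_\theta(t,x_1)e^{a_1x_1}t\,k_2(t)\,x_1,$$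 $$\frac{\partial R_\theta(t,x_2)}{\partial\gamma_0}=-R_\theta(t,x_2)e^{a_1x_2}\Big((t+s)+\frac{\gamma_1}{2}\frac{(\tau+s)s}{k_2(\tau)}\frac{k_1(t+s)}{k_1(\tau+s)}\Big),$$ $$\frac{\partial R_\theta(t,x_2)}{\partial\gamma_1}=-R_\theta(t,x_2)e^{a_1x_2}\Big(\frac{(t+s)^2}{2}-\frac{\gamma_0}{2}\frac{(\tau+s)s}{k_2(\tau)}\frac{k_1(t+s)}{k_1(\tau+s)}\Big),$$ $$\frac{\partial R_\theta(t,x_2)}{\partial a_1}=-R_\theta(t,x_2)e^{a_1x_2}\Big[(t+s)k_2(t+s)x_2+\frac{k_1(t+s)}{k_1(\tau+s)}(\tau+s)k_2(\tau+s)(x_1-x_2)\Big].$$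
   Context: Interval-monitored simple step-stress accelerated life test under a proportional hazards model with linear baseline hazard $h_0(t)=\gamma_0+\gamma_1t$ and stress effect $e^{a_1x}$, combined with the cumulative exposure model (the shift $s$ makes the cumulative hazard continuous at $\tau$, with $s<0$ and $\tau+s>0$). $N$ devices are tested; $n_j$ is the number failing in $(t_{j-1},t_j]$ for $j\le L$ and $n_{L+1}$ the number surviving past $t_L$. Stress is $x_1$ on $[0,\tau)$ and $x_2$ afterwards. *)

theory Defs
  imports "HOL-Analysis.Analysis"
begin

definition s_par :: "real \<Rightarrow> real \<Rightarrow> real \<Rightarrow> real \<Rightarrow> real \<Rightarrow> real \<Rightarrow> real" where
  "s_par x1 x2 tau g0 g1 a1 =
     (THE u. u > 0 \<and> g1 / 2 * u\<^sup>2 + g0 * u - exp (a1 * (x1 - x2)) * (g0 * tau + g1 * tau\<^sup>2 / 2) = 0) - tau"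

definition R1 :: "real \<Rightarrow> real \<Rightarrow> real \<Rightarrow> real \<Rightarrow> real \<Rightarrow> real" where
  "R1 x1 g0 g1 a1 t = exp (- exp (a1 * x1) * (g0 * t + g1 * t\<^sup>2 / 2))"

definition R2 :: "real \<Rightarrow> real \<Rightarrow> real \<Rightarrow> real \<Rightarrow> real \<Rightarrow> real \<Rightarrow> real \<Rightarrow> real" where
  "R2 x1 x2 tau g0 g1 a1 t =
     (let s = s_par x1 x2 tau g0 g1 a1
      in exp (- exp (a1 * x2) * (g0 * (t + s) + g1 * (t + s)\<^sup>2 / 2)))"

definition Rstep :: "real \<Rightarrow> real \<Rightarrow> real \<Rightarrow> real \<Rightarrow> real \<Rightarrow> real \<Rightarrow> real \<Rightarrow> real" where
  "Rstep x1 x2 tau g0 g1 a1 t =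
     (if t \<le> tau then R1 x1 g0 g1 a1 t else R2 x1 x2 tau g0 g1 a1 t)"

definition cellprob :: "real \<Rightarrow> real \<Rightarrow> real \<Rightarrow> (nat \<Rightarrow> real) \<Rightarrow> nat \<Rightarrow> real \<Rightarrow> real \<Rightarrow> real \<Rightarrow> nat \<Rightarrow> real" where
  "cellprob x1 x2 tau t L g0 g1 a1 j =
     (if j = L + 1 then Rstep x1 x2 tau g0 g1 a1 (t L)
      else Rstep x1 x2 tau g0 g1 a1 (t (j - 1)) - Rstep x1 x2 tau g0 g1 a1 (t j))"

definition dpd :: "real \<Rightarrow> nat \<Rightarrow> (nat \<Rightarrow> real) \<Rightarrow> (nat \<Rightarrow> real) \<Rightarrow> real" where
  "dpd beta L phat pr =
     (if beta = 0 then (\<Sum>j\<in>{1..L+1}. phat j * ln (phat j / pr j))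
      else (\<Sum>j\<in>{1..L+1}. pr j powr (beta + 1) - (1 + 1 / beta) * pr j powr beta * phat j
                            + 1 / beta * phat j powr (beta + 1)))"

definition k1 :: "real \<Rightarrow> real \<Rightarrow> real \<Rightarrow> real" where
  "k1 g0 g1 t = g1 * t + g0"

definition k2 :: "real \<Rightarrow> real \<Rightarrow> real \<Rightarrow> real" where
  "k2 g0 g1 t = g1 / 2 * t + g0"

definition dR1 :: "real \<Rightarrow> real \<Rightarrow> real \<Rightarrow> real \<Rightarrow> real \<Rightarrow> real ^ 3" where
  "dR1 x1 g0 g1 a1 t =
     (let R = R1 x1 g0 g1 a1 t; e = exp (a1 * x1) in
      vector [ - R * e * t, - R * e * (t\<^sup>2 / 2), - R * e * t * k2 g0 g1 t * x1 ])"

definition dR2 :: "real \<Rightarrow> real \<Rightarrow> real \<Rightarrow> real \<Rightarrow> real \<Rightarrow> real \<Rightarrow> real \<Rightarrow> real ^ 3" where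
  "dR2 x1 x2 tau g0 g1 a1 t =
     (let R = R2 x1 x2 tau g0 g1 a1 t; e = exp (a1 * x2); s = s_par x1 x2 tau g0 g1 a1;
          q = (tau + s) * s / k2 g0 g1 tau * (k1 g0 g1 (t + s) / k1 g0 g1 (tau + s)) in
      vector [ - R * e * ((t + s) + g1 / 2 * q),
               - R * e * ((t + s)\<^sup>2 / 2 - g0 / 2 * q),
               - R * e * ((t + s) * k2 g0 g1 (t + s) * x2
                          + k1 g0 g1 (t + s) / k1 g0 g1 (tau + s) * (tau + s) * k2 g0 g1 (tau + s) * (x1 - x2)) ])"

definition wrow :: "real \<Rightarrow> real \<Rightarrow> real \<Rightarrow> (nat \<Rightarrow> real) \<Rightarrow> nat \<Rightarrow> real \<Rightarrow> real \<Rightarrow> real \<Rightarrow> nat \<Rightarrow> real ^ 3" where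
  "wrow x1 x2 tau t L g0 g1 a1 j =
     (if j = L + 1 then dR2 x1 x2 tau g0 g1 a1 (t L)
      else if t (j - 1) < tau then dR1 x1 g0 g1 a1 (t (j - 1)) - dR1 x1 g0 g1 a1 (t j)
      else dR2 x1 x2 tau g0 g1 a1 (t (j - 1)) - dR2 x1 x2 tau g0 g1 a1 (t j))"

definition Ubeta :: "real \<Rightarrow> real \<Rightarrow> real \<Rightarrow> (nat \<Rightarrow> real) \<Rightarrow> nat \<Rightarrow> real \<Rightarrow> (nat \<Rightarrow> real) \<Rightarrow> real \<Rightarrow> real \<Rightarrow> real \<Rightarrow> real ^ 3" where
  "Ubeta x1 x2 tau t L beta phat g0 g1 a1 =
     (\<Sum>j\<in>{1..L+1}. (cellprob x1 x2 tau t L g0 g1 a1 j powr (beta - 1)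
                       * (phat j - cellprob x1 x2 tau t L g0 g1 a1 j))
                     *\<^sub>R wrow x1 x2 tau t L g0 g1 a1 j)"

end

theory Submission
  imports Defs
begin

(* An interior minimiser of theta \<mapsto> d_beta(phat, pi(theta)) over the open orthant is a critical
   point, so the derivative along every line theta + h v vanishes at h = 0. The shift s(theta) is
   the positive root of a quadratic with coefficients smooth in theta; differentiating that
   quadratic gives s', and with it w_j . v is the derivative of pi_j along the line. The pi_j sum
   to one, so the rows w_j sum to zero. The chain rule then turns the derivative of the divergence
   into -c <U_beta(theta), v>, with c = 1 for beta = 0 (using the zero row sum) and c = beta + 1
   otherwise; taking v = U_beta(theta) gives U_beta(theta) = 0. *)

definition quad_pos_root :: "real \<Rightarrow> real \<Rightarrow> real \<Rightarrow> real" where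
  "quad_pos_root b0 b1 c = (sqrt (b0\<^sup>2 + 2 * b1 * c) - b0) / b1"

lemma quad_pos_root_gt_0:
  assumes "b0 > 0" "b1 > 0" "c > 0"
  shows "quad_pos_root b0 b1 c > 0"
proof -
  have "sqrt (b0\<^sup>2) < sqrt (b0\<^sup>2 + 2 * b1 * c)"
    using assms by (intro real_sqrt_less_mono) auto
  with assms show ?thesis by (simp add: quad_pos_root_def)
qed

lemma quad_pos_root_eq:
  assumes "b1 > 0" "c > 0"
  shows "b1 / 2 * (quad_pos_root b0 b1 c)\<^sup>2 + b0 * quad_pos_root b0 b1 c = c"
proof -
  have "(sqrt (b0\<^sup>2 + 2 * b1 * c))\<^sup>2 = b0\<^sup>2 + 2 * b1 * c"
    using assms by (intro real_sqrt_pow2) simp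
  with assms show ?thesis
    unfolding quad_pos_root_def by (simp add: field_simps power2_eq_square)
qed

lemma quad_pos_root_unique:
  fixes b0 b1 u w :: real
  assumes "b0 > 0" "b1 > 0" "u > 0" "w > 0"
    and "b1 / 2 * u\<^sup>2 + b0 * u = b1 / 2 * w\<^sup>2 + b0 * w"
  shows "u = w"
proof -
  have "(u - w) * (b1 / 2 * (u + w) + b0) = 0"
    using assms(5) by (simp add: algebra_simps power2_eq_square) (simp add: field_simps)
  moreover have "b1 / 2 * (u + w) + b0 > 0"
    using assms by (simp add: add_pos_pos)
  ultimately show ?thesis by simp
qed

lemma s_par_eq_quad_pos_root:
  assumes "g0 > 0" "g1 > 0" "tau > 0"
  shows "s_par x1 x2 tau g0 g1 a1
    = quad_pos_root g0 g1 (exp (a1 * (x1 - x2)) * (g0 * tau + g1 * tau\<^sup>2 / 2)) - tau"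
proof -
  define c where "c = exp (a1 * (x1 - x2)) * (g0 * tau + g1 * tau\<^sup>2 / 2)"
  have "c > 0" using assms unfolding c_def by (simp add: add_pos_pos)
  note root = quad_pos_root_gt_0[OF assms(1,2) this] quad_pos_root_eq[OF assms(2) this]
  have "(THE u. u > 0 \<and> g1 / 2 * u\<^sup>2 + g0 * u - c = 0) = quad_pos_root g0 g1 c"
    by (rule the_equality) (use root quad_pos_root_unique[OF assms(1,2)] in auto)
  then show ?thesis unfolding s_par_def c_def by simp
qed

lemma s_par_root:
  fixes x1 x2 a1 :: real
  assumes "g0 > 0" "g1 > 0" "tau > 0"
  defines "u \<equiv> tau + s_par x1 x2 tau g0 g1 a1"
  shows "u > 0" "u * k2 g0 g1 u = exp (a1 * (x1 - x2)) * (tau * k2 g0 g1 tau)"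
proof -
  have "exp (a1 * (x1 - x2)) * (g0 * tau + g1 * tau\<^sup>2 / 2) > 0"
    using assms by (simp add: add_pos_pos)
  from quad_pos_root_gt_0[OF assms(1,2) this] quad_pos_root_eq[OF assms(2) this]
  show "u > 0" "u * k2 g0 g1 u = exp (a1 * (x1 - x2)) * (tau * k2 g0 g1 tau)"
    unfolding u_def s_par_eq_quad_pos_root[OF assms(1-3)] k2_def
    by (simp_all add: algebra_simps power2_eq_square)
qed

lemma quad_pos_root_deriv:
  fixes B0 B1 C :: "real \<Rightarrow> real"
  assumes "(B0 has_real_derivative b0') (at x)" "(B1 has_real_derivative b1') (at x)"
    and "(C has_real_derivative c') (at x)"
    and "B0 x > 0" "B1 x > 0" "C x > 0"
  defines "u \<equiv> quad_pos_root (B0 x) (B1 x) (C x)"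
  shows "((\<lambda>y. quad_pos_root (B0 y) (B1 y) (C y)) has_real_derivative
     (c' - b1' / 2 * u\<^sup>2 - b0' * u) / (B1 x * u + B0 x)) (at x)"
proof -
  have disc: "sqrt ((B0 x)\<^sup>2 + 2 * B1 x * C x) = B1 x * u + B0 x"
    using assms(5) unfolding u_def quad_pos_root_def by simp
  have c: "C x = B1 x / 2 * u\<^sup>2 + B0 x * u"
    using quad_pos_root_eq[OF assms(5,6)] unfolding u_def by simp
  have pos: "B1 x * u + B0 x > 0"
    using quad_pos_root_gt_0[OF assms(4-6)] assms(4,5) unfolding u_def by (simp add: add_pos_pos)
  have "0 < (B0 x)\<^sup>2 + 2 * B1 x * C x"
    using assms by (simp add: add_pos_pos)
  note outer = DERIV_real_sqrt[OF this]
  have inner: "((\<lambda>y. (B0 y)\<^sup>2 + 2 * B1 y * C y) has_real_derivative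
      2 * B0 x * b0' + 2 * (b1' * C x + B1 x * c')) (at x)"
    by (rule derivative_eq_intros assms refl)+ (simp add: algebra_simps)
  have sqrt_deriv: "((\<lambda>y. sqrt ((B0 y)\<^sup>2 + 2 * B1 y * C y)) has_real_derivative
      (2 * B0 x * b0' + 2 * (b1' * C x + B1 x * c')) / (2 * (B1 x * u + B0 x))) (at x)"
    by (rule DERIV_cong[OF DERIV_chain2[OF outer inner]]) (use pos in \<open>simp only: disc, simp add: field_simps\<close>)
  show ?thesis
    unfolding quad_pos_root_def
  proof (rule DERIV_divide[OF DERIV_diff[OF sqrt_deriv assms(1)] assms(2), THEN DERIV_cong])
    show "(((2 * B0 x * b0' + 2 * (b1' * C x + B1 x * c')) / (2 * (B1 x * u + B0 x)) - b0') * B1 x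
        - (sqrt ((B0 x)\<^sup>2 + 2 * B1 x * C x) - B0 x) * b1') / (B1 x * B1 x)
      = (c' - b1' / 2 * u\<^sup>2 - b0' * u) / (B1 x * u + B0 x)"
      unfolding disc unfolding c using pos assms(5)
      by (simp add: divide_simps) (simp add: algebra_simps power2_eq_square)
  qed (use assms(5) in simp)
qed

lemma s_par_directional_deriv:
  fixes v :: "real^3" and x1 x2 a1 :: real
  assumes g0: "g0 > 0" and g1: "g1 > 0" and tau: "tau > 0"
  defines "s \<equiv> s_par x1 x2 tau g0 g1 a1"
  shows "((\<lambda>h. s_par x1 x2 tau (g0 + h * v$1) (g1 + h * v$2) (a1 + h * v$3)) has_real_derivative
      ((tau + s) * s / k2 g0 g1 tau * (g1 / 2 * v$1 - g0 / 2 * v$2)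
        + (tau + s) * k2 g0 g1 (tau + s) * (x1 - x2) * v$3) / k1 g0 g1 (tau + s)) (at 0)"
proof -
  define E where "E = exp (a1 * (x1 - x2))"
  define C where "C = (\<lambda>h. exp ((a1 + h * v$3) * (x1 - x2)) * ((g0 + h * v$1) * tau + (g1 + h * v$2) * tau\<^sup>2 / 2))"
  define C' where "C' = E * ((x1 - x2) * v$3 * (tau * k2 g0 g1 tau) + v$1 * tau + v$2 * tau\<^sup>2 / 2)"
  define u where "u = tau + s"
  have K: "k2 g0 g1 tau > 0"
    using g0 g1 tau by (simp add: k2_def add_pos_pos)
  have "(C has_real_derivative C') (at 0)"
    unfolding C_def C'_def E_def k2_def by (rule derivative_eq_intros refl | simp)+ (simp add: field_simps power2_eq_square)
  moreover have line: "((\<lambda>h. c + h * d) has_real_derivative d) (at 0)" for c d :: real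
    by (rule derivative_eq_intros refl | simp)+
  moreover have "C 0 > 0"
    using g0 g1 tau unfolding C_def by (simp add: add_pos_pos)
  moreover have "u = quad_pos_root g0 g1 (C 0)"
    unfolding u_def s_def C_def s_par_eq_quad_pos_root[OF g0 g1 tau] by simp
  ultimately have "((\<lambda>h. quad_pos_root (g0 + h * v$1) (g1 + h * v$2) (C h) - tau) has_real_derivative
      (C' - v$2 / 2 * u\<^sup>2 - v$1 * u) / (g1 * u + g0)) (at 0)"
    using DERIV_diff[OF quad_pos_root_deriv[OF line line, of C C' g0 "v$1" g1 "v$2"] DERIV_const] g0 g1
    by simp
  then have deriv: "((\<lambda>h. s_par x1 x2 tau (g0 + h * v$1) (g1 + h * v$2) (a1 + h * v$3)) has_real_derivative
      (C' - v$2 / 2 * u\<^sup>2 - v$1 * u) / (g1 * u + g0)) (at 0)"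
  proof (rule has_field_derivative_transform_within_open[where S = "{h. 0 < g0 + h * v$1 \<and> 0 < g1 + h * v$2}"])
    show "open {h. 0 < g0 + h * v$1 \<and> 0 < g1 + h * v$2}"
      by (intro open_Collect_conj open_Collect_less continuous_intros)
  qed (use g0 g1 tau s_par_eq_quad_pos_root in \<open>auto simp: C_def\<close>)
  have Et: "E * tau = u * k2 g0 g1 u / k2 g0 g1 tau"
    using s_par_root(2)[OF g0 g1 tau] K unfolding u_def s_def E_def by (simp add: field_simps)
  have "C' = (E * tau) * k2 g0 g1 tau * (x1 - x2) * v$3 + (E * tau) * (v$1 + v$2 * tau / 2)"
    unfolding C'_def by (simp add: algebra_simps power2_eq_square)
  also have "\<dots> = u * k2 g0 g1 u * (x1 - x2) * v$3 + u * k2 g0 g1 u / k2 g0 g1 tau * (v$1 + v$2 * tau / 2)"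
    using K unfolding Et by simp
  finally have numerator: "C' - v$2 / 2 * u\<^sup>2 - v$1 * u
      = u * (u - tau) / k2 g0 g1 tau * (g1 / 2 * v$1 - g0 / 2 * v$2) + u * k2 g0 g1 u * (x1 - x2) * v$3"
    using K by (simp add: divide_simps) (simp add: k2_def algebra_simps power2_eq_square)
  show ?thesis
    using deriv unfolding numerator by (rule DERIV_cong) (simp add: u_def k1_def algebra_simps)
qed

lemma R2_at_tau:
  assumes "g0 > 0" "g1 > 0" "tau > 0"
  shows "R2 x1 x2 tau g0 g1 a1 tau = R1 x1 g0 g1 a1 tau"
proof -
  define u where "u = tau + s_par x1 x2 tau g0 g1 a1"
  have "u * k2 g0 g1 u = exp (a1 * (x1 - x2)) * (tau * k2 g0 g1 tau)"
    unfolding u_def by (rule s_par_root(2)[OF assms])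
  moreover have "exp (a1 * x2) * exp (a1 * (x1 - x2)) = exp (a1 * x1)"
    by (simp flip: exp_add add: algebra_simps)
  ultimately have "exp (a1 * x2) * (u * k2 g0 g1 u) = exp (a1 * x1) * (tau * k2 g0 g1 tau)"
    by (metis mult.assoc)
  then show ?thesis
    unfolding R2_def R1_def Let_def u_def[symmetric] k2_def by (simp add: algebra_simps power2_eq_square)
qed

lemma cum_hazard_strict_mono:
  fixes g0 g1 a b :: real
  assumes "g0 > 0" "g1 > 0" "0 \<le> a" "a < b"
  shows "g0 * a + g1 * a\<^sup>2 / 2 < g0 * b + g1 * b\<^sup>2 / 2"
proof -
  have "a\<^sup>2 \<le> b\<^sup>2" using assms by (intro power_mono) auto
  with assms show ?thesis by (intro add_less_le_mono) auto
qed

lemma R1_strict_antimono: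
  assumes "g0 > 0" "g1 > 0" "0 \<le> a" "a < b"
  shows "R1 x1 g0 g1 a1 b < R1 x1 g0 g1 a1 a"
  unfolding R1_def using cum_hazard_strict_mono[OF assms] by simp

lemma R2_strict_antimono:
  assumes "g0 > 0" "g1 > 0" "tau > 0" "tau \<le> a" "a < b"
  shows "R2 x1 x2 tau g0 g1 a1 b < R2 x1 x2 tau g0 g1 a1 a"
proof -
  have "0 \<le> a + s_par x1 x2 tau g0 g1 a1"
    using s_par_root(1)[OF assms(1-3), of x1 x2 a1] assms(4) by simp
  from cum_hazard_strict_mono[OF assms(1,2) this, of "b + s_par x1 x2 tau g0 g1 a1"] assms(5)
  show ?thesis unfolding R2_def Let_def by simp
qed

lemma Rstep_strict_antimono:
  assumes g0: "g0 > 0" and g1: "g1 > 0" and tau: "tau > 0" and "0 \<le> a" "a < b"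
  shows "Rstep x1 x2 tau g0 g1 a1 b < Rstep x1 x2 tau g0 g1 a1 a"
proof -
  consider "b \<le> tau" | "a \<le> tau" "tau < b" | "tau < a"
    using \<open>a < b\<close> by linarith
  then show ?thesis
  proof cases
    case 1
    then show ?thesis using R1_strict_antimono[OF g0 g1 \<open>0 \<le> a\<close> \<open>a < b\<close>] \<open>a < b\<close>
      unfolding Rstep_def by simp
  next
    case 2
    have "R2 x1 x2 tau g0 g1 a1 b < R1 x1 g0 g1 a1 tau"
      using R2_strict_antimono[OF g0 g1 tau order_refl \<open>tau < b\<close>] R2_at_tau[OF g0 g1 tau] by simp
    also have "\<dots> \<le> R1 x1 g0 g1 a1 a"
      using R1_strict_antimono[OF g0 g1 \<open>0 \<le> a\<close>] \<open>a \<le> tau\<close> by (cases "a = tau") (auto intro: less_imp_le)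
    finally show ?thesis using 2 unfolding Rstep_def by simp
  next
    case 3
    then show ?thesis using R2_strict_antimono[OF g0 g1 tau _ \<open>a < b\<close>] \<open>a < b\<close>
      unfolding Rstep_def by simp
  qed
qed

lemma inner_vector_3: "inner (vector [a, b, c] :: real^3) v = a * v$1 + b * v$2 + c * v$3"
  by (simp add: inner_vec_def sum_3)

lemma R1_directional_deriv:
  "((\<lambda>h. R1 x1 (g0 + h * v$1) (g1 + h * v$2) (a1 + h * v$3) t) has_real_derivative
     inner (dR1 x1 g0 g1 a1 t) v) (at 0)"
  unfolding R1_def dR1_def Let_def inner_vector_3 k2_def
  by (rule derivative_eq_intros refl | simp)+ (simp add: algebra_simps power2_eq_square)

lemma R2_directional_deriv:
  fixes v :: "real^3"
  assumes g0: "g0 > 0" and g1: "g1 > 0" and tau: "tau > 0"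
  shows "((\<lambda>h. R2 x1 x2 tau (g0 + h * v$1) (g1 + h * v$2) (a1 + h * v$3) t) has_real_derivative
     inner (dR2 x1 x2 tau g0 g1 a1 t) v) (at 0)"
proof -
  define s where "s = s_par x1 x2 tau g0 g1 a1"
  define u where "u = tau + s"
  define w where "w = t + s"
  define s' where "s' = (u * s / k2 g0 g1 tau * (g1 / 2 * v$1 - g0 / 2 * v$2)
      + u * k2 g0 g1 u * (x1 - x2) * v$3) / k1 g0 g1 u"
  define q where "q = u * s / k2 g0 g1 tau * (k1 g0 g1 w / k1 g0 g1 u)"
  define r where "r = k1 g0 g1 w / k1 g0 g1 u * u * k2 g0 g1 u * (x1 - x2)"
  define S where "S = (\<lambda>h. s_par x1 x2 tau (g0 + h * v$1) (g1 + h * v$2) (a1 + h * v$3))"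
  have S_deriv: "(S has_real_derivative s') (at 0)"
    using s_par_directional_deriv[OF g0 g1 tau] unfolding S_def s'_def u_def s_def .
  have "((\<lambda>h. exp ((a1 + h * v$3) * x2) * ((g0 + h * v$1) * (t + S h) + (g1 + h * v$2) * (t + S h)\<^sup>2 / 2))
      has_real_derivative exp (a1 * x2) * (v$3 * x2 * (g0 * w + g1 * w\<^sup>2 / 2)
        + v$1 * w + v$2 * w\<^sup>2 / 2 + (g0 + g1 * w) * s')) (at 0)"
    by (rule derivative_eq_intros refl S_deriv | (simp; fail))+ (simp add: S_def s_def w_def algebra_simps power2_eq_square)
  from DERIV_chain2[OF DERIV_exp DERIV_minus[OF this]]
  have R2_deriv: "((\<lambda>h. R2 x1 x2 tau (g0 + h * v$1) (g1 + h * v$2) (a1 + h * v$3) t) has_real_derivative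
      R2 x1 x2 tau g0 g1 a1 t * - (exp (a1 * x2) * (v$3 * x2 * (g0 * w + g1 * w\<^sup>2 / 2)
        + v$1 * w + v$2 * w\<^sup>2 / 2 + (g0 + g1 * w) * s'))) (at 0)"
    unfolding R2_def Let_def S_def s_def w_def by simp
  \<comment> \<open>The chain rule through s contributes k1(t + s) * s', which splits into the q- and r-terms of dR2.\<close>
  have s'_scaled: "(g0 + g1 * w) * s' = g1 / 2 * q * v$1 - g0 / 2 * q * v$2 + r * v$3"
  proof -
    have "(g0 + g1 * w) * s' = k1 g0 g1 w / k1 g0 g1 u * (u * s / k2 g0 g1 tau * (g1 / 2 * v$1 - g0 / 2 * v$2)
        + u * k2 g0 g1 u * (x1 - x2) * v$3)"
      unfolding s'_def k1_def by simp
    then show ?thesis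
      unfolding q_def r_def by (simp add: algebra_simps diff_divide_distrib)
  qed
  show ?thesis
    unfolding dR2_def Let_def inner_vector_3
    unfolding s_def[symmetric] u_def[symmetric] w_def[symmetric] q_def[symmetric] r_def[symmetric]
    using R2_deriv[unfolded s'_scaled] by (rule DERIV_cong) (simp add: k2_def algebra_simps power2_eq_square)
qed

lemma Rstep_directional_deriv_before:
  assumes "t \<le> tau"
  shows "((\<lambda>h. Rstep x1 x2 tau (g0 + h * v$1) (g1 + h * v$2) (a1 + h * v$3) t) has_real_derivative
     inner (dR1 x1 g0 g1 a1 t) v) (at 0)"
  using R1_directional_deriv assms unfolding Rstep_def by simp

(* At t = tau the step function follows R1, but it agrees with R2 there for all positive
   parameters (R2_at_tau), so it still has the derivative of R2. *)
lemma Rstep_directional_deriv_after: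
  fixes v :: "real^3"
  assumes g0: "g0 > 0" and g1: "g1 > 0" and tau: "tau > 0" and "tau \<le> t"
  shows "((\<lambda>h. Rstep x1 x2 tau (g0 + h * v$1) (g1 + h * v$2) (a1 + h * v$3) t) has_real_derivative
     inner (dR2 x1 x2 tau g0 g1 a1 t) v) (at 0)"
proof (rule has_field_derivative_transform_within_open[OF R2_directional_deriv[OF g0 g1 tau]])
  show "open {h. 0 < g0 + h * v$1 \<and> 0 < g1 + h * v$2}"
    by (intro open_Collect_conj open_Collect_less continuous_intros)
  fix h assume "h \<in> {h. 0 < g0 + h * v$1 \<and> 0 < g1 + h * v$2}"
  then show "R2 x1 x2 tau (g0 + h * v$1) (g1 + h * v$2) (a1 + h * v$3) t
      = Rstep x1 x2 tau (g0 + h * v$1) (g1 + h * v$2) (a1 + h * v$3) t"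
    using R2_at_tau[of "g0 + h * v$1" "g1 + h * v$2" tau] tau \<open>tau \<le> t\<close>
    unfolding Rstep_def by (cases "t = tau") auto
qed (use g0 g1 in auto)

lemma inspection_times_less:
  fixes t :: "nat \<Rightarrow> real"
  assumes "\<And>j. j < L \<Longrightarrow> t j < t (Suc j)" "i < j" "j \<le> L"
  shows "t i < t j"
  by (rule lift_Suc_mono_less_ivl[where N = "{..<L}"]) (use assms in auto)

lemma inspection_times_le:
  fixes t :: "nat \<Rightarrow> real"
  assumes "\<And>j. j < L \<Longrightarrow> t j < t (Suc j)" "i \<le> j" "j \<le> L"
  shows "t i \<le> t j"
  using inspection_times_less[of L t i j] assms by (cases "i = j") auto

lemma cellprob_pos:
  assumes "g0 > 0" "g1 > 0" "tau > 0" "t 0 = 0" "\<And>j. j < L \<Longrightarrow> t j < t (Suc j)"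
    and "j \<in> {1..L+1}"
  shows "cellprob x1 x2 tau t L g0 g1 a1 j > 0"
proof (cases "j = L + 1")
  case True
  then show ?thesis unfolding cellprob_def Rstep_def R1_def R2_def Let_def by simp
next
  case False
  with assms(6) have "t (j - 1) < t j" "0 \<le> t (j - 1)"
    using inspection_times_less[of L t, OF assms(5), of "j - 1" j]
      inspection_times_le[of L t, OF assms(5), of 0 "j - 1"] assms(4)
    by auto
  with False show ?thesis
    using Rstep_strict_antimono[OF assms(1-3)] unfolding cellprob_def by simp
qed

lemma cellprob_directional_deriv:
  fixes v :: "real^3"
  assumes g0: "g0 > 0" and g1: "g1 > 0" and tau: "tau > 0"
    and t: "\<And>j. j < L \<Longrightarrow> t j < t (Suc j)" and "k \<le> L" "t k = tau"
    and j: "j \<in> {1..L+1}"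
  shows "((\<lambda>h. cellprob x1 x2 tau t L (g0 + h * v$1) (g1 + h * v$2) (a1 + h * v$3) j) has_real_derivative
       inner (wrow x1 x2 tau t L g0 g1 a1 j) v) (at 0)"
proof -
  note before = Rstep_directional_deriv_before and after = Rstep_directional_deriv_after[OF g0 g1 tau]
  consider "j = L + 1" | "j \<le> L" "t (j - 1) < tau" | "j \<le> L" "tau \<le> t (j - 1)"
    using j by force
  then show ?thesis
  proof cases
    case 1
    have "tau \<le> t L" using inspection_times_le[of L t, OF t \<open>k \<le> L\<close> order_refl] \<open>t k = tau\<close> by simp
    with 1 show ?thesis using after unfolding cellprob_def wrow_def by simp
  next
    case 2
    have "j \<le> k"
      using inspection_times_le[of L t, OF t, of k "j - 1"] \<open>t k = tau\<close> 2 by force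
    then have "t j \<le> tau"
      using inspection_times_le[of L t, OF t \<open>j \<le> k\<close> \<open>k \<le> L\<close>] \<open>t k = tau\<close> by simp
    with 2 show ?thesis
      using DERIV_diff[OF before before, of "t (j - 1)" tau "t j"]
      unfolding cellprob_def wrow_def by (simp add: inner_diff_left)
  next
    case 3
    moreover have "t (j - 1) < t j" using inspection_times_less[of L t, OF t, of "j - 1" j] 3 j by simp
    ultimately show ?thesis
      using DERIV_diff[OF after after, of "t (j - 1)" "t j"]
      unfolding cellprob_def wrow_def by (simp add: inner_diff_left)
  qed
qed

lemma sum_cellprob:
  assumes "t 0 = 0" "tau \<ge> 0"
  shows "(\<Sum>j\<in>{1..L+1}. cellprob x1 x2 tau t L g0 g1 a1 j) = 1"
proof -
  let ?R = "\<lambda>j. Rstep x1 x2 tau g0 g1 a1 (t j)"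
  have "(\<Sum>j\<in>{1..L}. cellprob x1 x2 tau t L g0 g1 a1 j) = (\<Sum>j\<in>{1..L}. ?R (j - 1) - ?R j)"
    by (rule sum.cong) (auto simp: cellprob_def)
  also have "\<dots> = ?R 0 - ?R L"
    using sum_telescope''[of 0 L "\<lambda>j. - ?R j"] by (simp add: algebra_simps)
  finally show ?thesis
    using assms by (simp add: cellprob_def Rstep_def R1_def)
qed

lemma sum_wrow_eq_0:
  assumes g0: "g0 > 0" and g1: "g1 > 0" and tau: "tau > 0" and "t 0 = 0"
    and t: "\<And>j. j < L \<Longrightarrow> t j < t (Suc j)" and k: "k \<le> L" "t k = tau"
  shows "(\<Sum>j\<in>{1..L+1}. wrow x1 x2 tau t L g0 g1 a1 j) = 0"
proof -
  define v where "v = (\<Sum>j\<in>{1..L+1}. wrow x1 x2 tau t L g0 g1 a1 j)"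
  have "((\<lambda>h. \<Sum>j\<in>{1..L+1}. cellprob x1 x2 tau t L (g0 + h * v$1) (g1 + h * v$2) (a1 + h * v$3) j)
      has_real_derivative (\<Sum>j\<in>{1..L+1}. inner (wrow x1 x2 tau t L g0 g1 a1 j) v)) (at 0)"
    by (intro DERIV_sum cellprob_directional_deriv[OF g0 g1 tau t k])
  moreover have "(\<lambda>h. \<Sum>j\<in>{1..L+1}. cellprob x1 x2 tau t L (g0 + h * v$1) (g1 + h * v$2) (a1 + h * v$3) j)
      = (\<lambda>h. 1)"
    using sum_cellprob[of t, OF \<open>t 0 = 0\<close>] tau by simp
  ultimately have "inner v v = 0"
    using DERIV_unique[OF _ DERIV_const] unfolding v_def inner_sum_left[symmetric] by metis
  then show ?thesis unfolding v_def by simp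
qed

lemma kl_summand_deriv:
  fixes f :: "real \<Rightarrow> real"
  assumes "p \<ge> 0" "f 0 > 0" "(f has_real_derivative m) (at 0)"
  shows "((\<lambda>h. p * ln (p / f h)) has_real_derivative - (p * m / f 0)) (at 0)"
proof (cases "p = 0")
  case False
  with assms have "p / f 0 > 0" by simp
  from DERIV_cmult[OF DERIV_chain2[OF DERIV_ln_divide[OF this] DERIV_divide[OF DERIV_const assms(3)]], of p]
  show ?thesis using assms(2) \<open>p / f 0 > 0\<close> by (simp add: field_simps)
qed simp

lemma dpd_summand_deriv:
  fixes f :: "real \<Rightarrow> real"
  assumes "beta > 0" "f 0 > 0" "(f has_real_derivative m) (at 0)"
  shows "((\<lambda>h. f h powr (beta + 1) - (1 + 1 / beta) * f h powr beta * p + 1 / beta * p powr (beta + 1))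
    has_real_derivative - (beta + 1) * (f 0 powr (beta - 1) * (p - f 0) * m)) (at 0)"
proof -
  have "((\<lambda>h. f h powr (beta + 1) - (1 + 1 / beta) * f h powr beta * p + 1 / beta * p powr (beta + 1))
    has_real_derivative (beta + 1) * f 0 powr (beta + 1 - of_nat 1) * m
      - (1 + 1 / beta) * (beta * f 0 powr (beta - of_nat 1) * m) * p + 0) (at 0)"
    by (intro DERIV_add DERIV_diff DERIV_cmult DERIV_cmult_right DERIV_fun_powr assms DERIV_const)
  moreover have "f 0 powr beta = f 0 powr (beta - 1) * f 0"
    using assms(2) by (simp add: powr_diff)
  ultimately show ?thesis
    using assms(1) by (elim DERIV_cong) (simp add: field_simps)
qed

lemma dpd_deriv_along_curve:
  fixes P :: "real \<Rightarrow> nat \<Rightarrow> real" and p m :: "nat \<Rightarrow> real"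
  assumes beta: "beta \<ge> 0" and p: "\<And>j. p j \<ge> 0"
    and pos: "\<And>j. j \<in> {1..L+1} \<Longrightarrow> P 0 j > 0"
    and deriv: "\<And>j. j \<in> {1..L+1} \<Longrightarrow> ((\<lambda>h. P h j) has_real_derivative m j) (at 0)"
    and sum_m: "(\<Sum>j\<in>{1..L+1}. m j) = 0"
  shows "((\<lambda>h. dpd beta L p (P h)) has_real_derivative
     - (if beta = 0 then 1 else beta + 1) * (\<Sum>j\<in>{1..L+1}. P 0 j powr (beta - 1) * (p j - P 0 j) * m j)) (at 0)"
proof (cases "beta = 0")
  case True
  have "(\<Sum>j\<in>{1..L+1}. P 0 j powr (beta - 1) * (p j - P 0 j) * m j)
      = (\<Sum>j\<in>{1..L+1}. p j * m j / P 0 j - m j)"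
  proof (rule sum.cong)
    fix j assume "j \<in> {1..L+1}"
    with pos have "P 0 j > 0" by simp
    moreover from this have "P 0 j powr (beta - 1) = 1 / P 0 j"
      using True by (simp add: powr_minus divide_inverse)
    ultimately show "P 0 j powr (beta - 1) * (p j - P 0 j) * m j = p j * m j / P 0 j - m j"
      by (simp add: field_simps)
  qed simp
  also have "\<dots> = (\<Sum>j\<in>{1..L+1}. p j * m j / P 0 j)"
    using sum_m by (simp add: sum_subtractf)
  finally have derivative_value: "- (if beta = 0 then 1 else beta + 1)
      * (\<Sum>j\<in>{1..L+1}. P 0 j powr (beta - 1) * (p j - P 0 j) * m j)
      = (\<Sum>j\<in>{1..L+1}. - (p j * m j / P 0 j))"
    using True by (simp only: sum_negf) simp
  have "((\<lambda>h. \<Sum>j\<in>{1..L+1}. p j * ln (p j / P h j)) has_real_derivative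
      (\<Sum>j\<in>{1..L+1}. - (p j * m j / P 0 j))) (at 0)"
    by (intro DERIV_sum kl_summand_deriv p pos deriv)
  then show ?thesis
    unfolding derivative_value dpd_def using True by simp
next
  case False
  with beta have "beta > 0" by simp
  then have "((\<lambda>h. dpd beta L p (P h)) has_real_derivative
      (\<Sum>j\<in>{1..L+1}. - (beta + 1) * (P 0 j powr (beta - 1) * (p j - P 0 j) * m j))) (at 0)"
    unfolding dpd_def using False by (simp only: if_False) (intro DERIV_sum dpd_summand_deriv \<open>beta > 0\<close> pos deriv)
  then show ?thesis
    using False by (simp only: sum_distrib_left[symmetric] if_False)
qed

lemma directional_deriv_eq_0_at_min:
  fixes f :: "'a::real_normed_vector \<Rightarrow> real"
  assumes "open S" "x \<in> S" "\<And>y. y \<in> S \<Longrightarrow> f x \<le> f y"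
    and "((\<lambda>h. f (x + h *\<^sub>R v)) has_real_derivative D) (at 0)"
  shows "D = 0"
proof -
  have "((\<lambda>h. x + h *\<^sub>R v) \<longlongrightarrow> x + 0 *\<^sub>R v) (at 0)"
    by (intro tendsto_intros)
  then have "\<forall>\<^sub>F h in at 0. x + h *\<^sub>R v \<in> S"
    using assms(1,2) by (intro topological_tendstoD) auto
  then have "\<forall>\<^sub>F h in at 0. f (x + 0 *\<^sub>R v) \<le> f (x + h *\<^sub>R v)"
    by eventually_elim (simp add: assms(3))
  from has_derivative_local_min[OF has_field_derivative_imp_has_derivative[OF assms(4)] this]
  show "D = 0" by (metis mult.right_neutral)
qed

lemma dpd_cellprob_directional_deriv:
  fixes v :: "real^3"
  assumes "beta \<ge> 0" "\<And>j. p j \<ge> 0" and g: "g0 > 0" "g1 > 0" "tau > 0"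
    and "t 0 = 0" and times: "\<And>j. j < L \<Longrightarrow> t j < t (Suc j)" and k: "k \<le> L" "t k = tau"
  shows "((\<lambda>h. dpd beta L p (cellprob x1 x2 tau t L (g0 + h * v$1) (g1 + h * v$2) (a1 + h * v$3)))
    has_real_derivative - (if beta = 0 then 1 else beta + 1) * inner (Ubeta x1 x2 tau t L beta p g0 g1 a1) v)
    (at 0)"
proof -
  define P where "P = (\<lambda>h. cellprob x1 x2 tau t L (g0 + h * v$1) (g1 + h * v$2) (a1 + h * v$3))"
  have "\<And>j. j \<in> {1..L+1} \<Longrightarrow> P 0 j > 0"
    unfolding P_def using cellprob_pos[OF g \<open>t 0 = 0\<close> times] by simp
  moreover have "\<And>j. j \<in> {1..L+1} \<Longrightarrow>
      ((\<lambda>h. P h j) has_real_derivative inner (wrow x1 x2 tau t L g0 g1 a1 j) v) (at 0)"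
    unfolding P_def by (rule cellprob_directional_deriv[OF g times k])
  moreover have "(\<Sum>j\<in>{1..L+1}. inner (wrow x1 x2 tau t L g0 g1 a1 j) v) = 0"
    using sum_wrow_eq_0[OF g \<open>t 0 = 0\<close> times k] by (simp flip: inner_sum_left)
  ultimately have "((\<lambda>h. dpd beta L p (P h)) has_real_derivative
      - (if beta = 0 then 1 else beta + 1)
        * (\<Sum>j\<in>{1..L+1}. P 0 j powr (beta - 1) * (p j - P 0 j) * inner (wrow x1 x2 tau t L g0 g1 a1 j) v))
      (at 0)"
    by (rule dpd_deriv_along_curve[OF assms(1,2)])
  moreover have "inner (Ubeta x1 x2 tau t L beta p g0 g1 a1) v
      = (\<Sum>j\<in>{1..L+1}. P 0 j powr (beta - 1) * (p j - P 0 j) * inner (wrow x1 x2 tau t L g0 g1 a1 j) v)"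
    unfolding Ubeta_def P_def by (simp only: inner_sum_left inner_scaleR_left) simp
  ultimately show ?thesis
    unfolding P_def by simp
qed

theorem theorem1:
  fixes x1 x2 tau beta :: real and t :: "nat \<Rightarrow> real" and L k N :: nat
    and n :: "nat \<Rightarrow> nat" and g0 g1 a1 :: real
  assumes "x1 < x2" and "tau > 0"
    and "t 0 = 0" and "\<And>j. j < L \<Longrightarrow> t j < t (Suc j)"
    and "1 \<le> k" and "k < L" and "t k = tau"
    and "N = (\<Sum>j\<in>{1..L+1}. n j)" and "N > 0"
    and "beta \<ge> 0"
    and "g0 > 0" and "g1 > 0" and "a1 > 0"
    and "\<And>h0 h1 b1. h0 > 0 \<Longrightarrow> h1 > 0 \<Longrightarrow> b1 > 0 \<Longrightarrow>
           dpd beta L (\<lambda>j. real (n j) / real N) (cellprob x1 x2 tau t L g0 g1 a1)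
             \<le> dpd beta L (\<lambda>j. real (n j) / real N) (cellprob x1 x2 tau t L h0 h1 b1)"
  shows "Ubeta x1 x2 tau t L beta (\<lambda>j. real (n j) / real N) g0 g1 a1 = 0"
proof -
  define p where "p = (\<lambda>j. real (n j) / real N)"
  define U where "U = Ubeta x1 x2 tau t L beta p g0 g1 a1"
  define c where "c = (if beta = 0 then 1 else beta + 1 :: real)"
  have "((\<lambda>h. dpd beta L p (cellprob x1 x2 tau t L (g0 + h * U$1) (g1 + h * U$2) (a1 + h * U$3)))
      has_real_derivative - c * inner U U) (at 0)"
    unfolding U_def c_def using assms(2-4,6,7,10-12)
    by (intro dpd_cellprob_directional_deriv) (auto simp: p_def)
  then have "((\<lambda>h. (\<lambda>\<eta> :: real^3. dpd beta L p (cellprob x1 x2 tau t L (\<eta>$1) (\<eta>$2) (\<eta>$3)))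
      (vector [g0, g1, a1] + h *\<^sub>R U)) has_real_derivative - c * inner U U) (at 0)"
    by simp
  moreover have "open {\<eta> :: real^3. 0 < \<eta>$1 \<and> 0 < \<eta>$2 \<and> 0 < \<eta>$3}"
    by (intro open_Collect_conj open_Collect_less continuous_intros)
  ultimately have "- c * inner U U = 0"
    by (rule directional_deriv_eq_0_at_min[rotated 3]) (use assms(11-14) in \<open>auto simp: p_def\<close>)
  moreover have "c > 0" using \<open>beta \<ge> 0\<close> unfolding c_def by simp
  ultimately show ?thesis unfolding U_def p_def by simp
qed

end
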